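(* Let $n$ be a positive integer. If $n \equiv 1 \pmod 3$, then $n \leq \operatorname{adim}(P_3 \square P_n) \leq n+1$. Otherwise, $n-1 \leq \operatorname{adim}(P_3 \square P_n) \leq n$.
   Context: All graphs are finite, simple and undirected. $P_n$ is the path on $n$ vertices and $\square$ is the Cartesian product of graphs: $V(G_1\square G_2)=V(G_1)\times V(G_2)$, and $(u,u')$ is adjacent to $(v,v')$ iff either $u=v$ and $u'v'\in E(G_2)$, or $u'=v'$ and $uv\in E(G_1)$. For a graph $G$, $d(u,v)$ is the shortest-path distance ($\infty$ if $u,v$ lie in different components), and $d_1(u,v)=\min(d(u,v),2)$. A set $A\subseteq V(G)$ is an adjacency resolving set if for all distinct $x,y\in V(G)$ there is $z\in A$ with $d_1(z,x)\neq d_1(z,y)$. The adjacency dimension $\operatorname{adim}(G)$ is the minimum cardinality of an adjacency resolving set. *)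

theory Defs
  imports Main "HOL-Library.Extended_Nat"
begin

text \<open>A finite simple graph is given by a vertex set V and a symmetric irreflexive
adjacency relation E (only pairs in V are relevant).\<close>

definition path_graph :: "nat \<Rightarrow> nat set" where
  "path_graph n = {0..<n}"

definition path_adj :: "nat \<Rightarrow> nat \<Rightarrow> bool" where
  "path_adj u v \<longleftrightarrow> u = v + 1 \<or> v = u + 1"

definition cart_adj :: "('a \<Rightarrow> 'a \<Rightarrow> bool) \<Rightarrow> ('b \<Rightarrow> 'b \<Rightarrow> bool) \<Rightarrow> ('a \<times> 'b) \<Rightarrow> ('a \<times> 'b) \<Rightarrow> bool" where
  "cart_adj E1 E2 x y \<longleftrightarrow>
     (fst x = fst y \<and> E2 (snd x) (snd y)) \<or> (snd x = snd y \<and> E1 (fst x) (fst y))"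

definition is_walk :: "'a set \<Rightarrow> ('a \<Rightarrow> 'a \<Rightarrow> bool) \<Rightarrow> 'a list \<Rightarrow> bool" where
  "is_walk V E ps \<longleftrightarrow> ps \<noteq> [] \<and> set ps \<subseteq> V \<and> (\<forall>i < length ps - 1. E (ps ! i) (ps ! Suc i))"

definition dist :: "'a set \<Rightarrow> ('a \<Rightarrow> 'a \<Rightarrow> bool) \<Rightarrow> 'a \<Rightarrow> 'a \<Rightarrow> enat" where
  "dist V E u v = (if \<exists>ps. is_walk V E ps \<and> hd ps = u \<and> last ps = v
     then enat (LEAST k. \<exists>ps. is_walk V E ps \<and> hd ps = u \<and> last ps = v \<and> length ps = Suc k)
     else \<infinity>)"

definition dist1 :: "'a set \<Rightarrow> ('a \<Rightarrow> 'a \<Rightarrow> bool) \<Rightarrow> 'a \<Rightarrow> 'a \<Rightarrow> enat" where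
  "dist1 V E u v = min (dist V E u v) 2"

definition adj_resolving :: "'a set \<Rightarrow> ('a \<Rightarrow> 'a \<Rightarrow> bool) \<Rightarrow> 'a set \<Rightarrow> bool" where
  "adj_resolving V E A \<longleftrightarrow> A \<subseteq> V \<and>
     (\<forall>x\<in>V. \<forall>y\<in>V. x \<noteq> y \<longrightarrow> (\<exists>z\<in>A. dist1 V E z x \<noteq> dist1 V E z y))"

definition adim :: "'a set \<Rightarrow> ('a \<Rightarrow> 'a \<Rightarrow> bool) \<Rightarrow> nat" where
  "adim V E = (LEAST k. \<exists>A. adj_resolving V E A \<and> card A = k)"

definition grid_V :: "nat \<Rightarrow> (nat \<times> nat) set" where
  "grid_V n = path_graph 3 \<times> path_graph n"

definition grid_E :: "(nat \<times> nat) \<Rightarrow> (nat \<times> nat) \<Rightarrow> bool" where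
  "grid_E = cart_adj path_adj path_adj"

end

theory Submission
  imports Defs
begin

(* A set A is adjacency resolving iff the vertices outside A have pairwise distinct traces, their
   sets of neighbours in A.
   Upper bound: putting A in rows {0, 2} of every third column and in row 1 of the next column
   gives pairwise distinct traces; this uses n vertices, or n + 1 when n mod 3 = 1.
   Lower bound by discharging: every vertex outside A with nonempty trace sends charge 2 to its
   neighbours in A, and the resolving property forces every vertex of A to receive at most 4.
   Since at most one trace is empty, 2 (3n - |A| - 1) <= 4 |A|, hence |A| >= n. *)

section \<open>Distances and adjacency resolving sets\<close>

lemma hd_eq_last_if_length_1: "length ps = 1 \<Longrightarrow> hd ps = last ps"
  by (cases ps) auto

lemma is_walk_length_2: "is_walk V E ps \<Longrightarrow> length ps = 2 \<Longrightarrow> E (hd ps) (last ps)"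
  by (cases ps rule: remdups_adj.cases) (auto simp: is_walk_def)

lemma dist_self: "u \<in> V \<Longrightarrow> dist V E u u = 0"
proof -
  assume "u \<in> V"
  then have walk: "is_walk V E [u]" by (simp add: is_walk_def)
  then have "(LEAST k. \<exists>ps. is_walk V E ps \<and> hd ps = u \<and> last ps = u \<and> length ps = Suc k) = 0"
    by (intro Least_eq_0 exI[of _ "[u]"]) simp
  with walk show ?thesis by (auto simp: dist_def zero_enat_def intro!: exI[of _ "[u]"])
qed

lemma dist_eq_1_if_adjacent:
  "u \<in> V \<Longrightarrow> v \<in> V \<Longrightarrow> u \<noteq> v \<Longrightarrow> E u v \<Longrightarrow> dist V E u v = 1"
proof -
  assume "u \<in> V" "v \<in> V" "u \<noteq> v" "E u v"
  then have walk: "is_walk V E [u, v]" by (simp add: is_walk_def less_Suc_eq)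
  have "(LEAST k. \<exists>ps. is_walk V E ps \<and> hd ps = u \<and> last ps = v \<and> length ps = Suc k) = 1"
  proof (rule Least_equality)
    show "\<exists>ps. is_walk V E ps \<and> hd ps = u \<and> last ps = v \<and> length ps = Suc 1"
      using walk by (intro exI[of _ "[u, v]"]) simp
  next
    fix k assume "\<exists>ps. is_walk V E ps \<and> hd ps = u \<and> last ps = v \<and> length ps = Suc k"
    then show "1 \<le> k" using \<open>u \<noteq> v\<close> hd_eq_last_if_length_1 by (cases k) fastforce+
  qed
  with walk show ?thesis by (auto simp: dist_def one_enat_def intro!: exI[of _ "[u, v]"])
qed

lemma dist_ge_2_if_not_adjacent: "u \<noteq> v \<Longrightarrow> \<not> E u v \<Longrightarrow> 2 \<le> dist V E u v"
proof -
  assume "u \<noteq> v" "\<not> E u v"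
  have "2 \<le> k" if "is_walk V E ps" "hd ps = u" "last ps = v" "length ps = Suc k" for ps k
  proof (rule ccontr)
    assume "\<not> 2 \<le> k"
    then consider "length ps = 1" | "length ps = 2" using \<open>length ps = Suc k\<close> by linarith
    then show False
    proof cases
      case 1
      then show False using hd_eq_last_if_length_1[of ps] that \<open>u \<noteq> v\<close> by simp
    next
      case 2
      then show False using is_walk_length_2[of V E ps] that \<open>\<not> E u v\<close> by simp
    qed
  qed
  moreover have "\<exists>k ps. is_walk V E ps \<and> hd ps = u \<and> last ps = v \<and> length ps = Suc k"
    if "\<exists>ps. is_walk V E ps \<and> hd ps = u \<and> last ps = v"
  proof -
    from that obtain ps where "is_walk V E ps" "hd ps = u" "last ps = v" by blast
    then show ?thesis by (intro exI[of _ "length ps - 1"] exI[of _ ps]) (simp add: is_walk_def)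
  qed
  ultimately have "2 \<le> (LEAST k. \<exists>ps. is_walk V E ps \<and> hd ps = u \<and> last ps = v \<and> length ps = Suc k)"
    if "\<exists>ps. is_walk V E ps \<and> hd ps = u \<and> last ps = v"
    using that by (blast intro: LeastI2_ex)
  then show ?thesis by (simp add: dist_def numeral_eq_enat)
qed

lemma dist1_eq:
  "u \<in> V \<Longrightarrow> v \<in> V \<Longrightarrow> dist1 V E u v = (if u = v then 0 else if E u v then 1 else 2)"
  using dist_self[of u V E] dist_eq_1_if_adjacent[of u V v E] dist_ge_2_if_not_adjacent[of u v E V]
  by (auto simp: dist1_def min_def)

definition adj_trace :: "('a \<Rightarrow> 'a \<Rightarrow> bool) \<Rightarrow> 'a set \<Rightarrow> 'a \<Rightarrow> 'a set" where
  "adj_trace E A v = {z \<in> A. E z v}"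

lemma adj_resolving_iff_inj_on_adj_trace:
  "adj_resolving V E A \<longleftrightarrow> A \<subseteq> V \<and> inj_on (adj_trace E A) (V - A)"
proof (cases "A \<subseteq> V")
  case True
  have "(\<exists>z\<in>A. dist1 V E z x \<noteq> dist1 V E z y) \<longleftrightarrow>
      x \<in> A \<or> y \<in> A \<or> adj_trace E A x \<noteq> adj_trace E A y"
    if "x \<in> V" "y \<in> V" "x \<noteq> y" for x y
    using that True by (auto simp: dist1_eq adj_trace_def subset_iff split: if_splits)
  then show ?thesis by (auto simp: adj_resolving_def inj_on_def)
qed (simp add: adj_resolving_def)

lemma adj_resolving_self: "adj_resolving V E V"
  by (simp add: adj_resolving_iff_inj_on_adj_trace)

lemma adim_le_card: "adj_resolving V E A \<Longrightarrow> adim V E \<le> card A"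
  unfolding adim_def by (auto intro: Least_le)

lemma adim_attained: "\<exists>A. adj_resolving V E A \<and> card A = adim V E"
proof -
  have "\<exists>k A. adj_resolving V E A \<and> card A = k" using adj_resolving_self by blast
  then show ?thesis unfolding adim_def by (rule LeastI_ex)
qed

lemma card_le_2_if_subset_doubleton: "B \<subseteq> {a, b} \<Longrightarrow> card B \<le> 2"
  by (rule order_trans[OF card_mono]) (auto simp: card_insert_if)

lemma sum_insert4_le: "(\<Sum>v\<in>{a, b, c, d}. f v) \<le> f a + f b + f c + (f d :: nat)"
  by (simp add: sum.insert_if)

lemma card_le_Suc_card_filter_if_inj_on:
  assumes "inj_on f S" "finite S"
  shows "card S \<le> Suc (card {x \<in> S. f x \<noteq> b})"
proof -
  have "card {x \<in> S. f x = b} \<le> 1"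
    using assms(1) by (auto simp: card_le_Suc0_iff_eq[OF finite_subset[OF _ assms(2)]] dest: inj_onD)
  moreover have "card S = card {x \<in> S. f x \<noteq> b} + card {x \<in> S. f x = b}"
    using assms(2) by (subst card_Un_disjoint[symmetric]) (auto intro: arg_cong[where f = card])
  ultimately show ?thesis by linarith
qed

lemma double_counting_le:
  fixes c :: "'a \<Rightarrow> 'b \<Rightarrow> nat"
  assumes "finite A" "finite F" "F' \<subseteq> F"
    and "\<And>v. v \<in> F' \<Longrightarrow> s \<le> (\<Sum>a\<in>A. c v a)"
    and "\<And>a. a \<in> A \<Longrightarrow> (\<Sum>v\<in>F. c v a) \<le> t"
  shows "s * card F' \<le> t * card A"
proof -
  have "s * card F' = (\<Sum>v\<in>F'. s)" by simp
  also have "\<dots> \<le> (\<Sum>v\<in>F'. \<Sum>a\<in>A. c v a)" by (rule sum_mono) (rule assms(4))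
  also have "\<dots> = (\<Sum>a\<in>A. \<Sum>v\<in>F'. c v a)" by (rule sum.swap)
  also have "\<dots> \<le> (\<Sum>a\<in>A. \<Sum>v\<in>F. c v a)"
    using assms(2,3) by (intro sum_mono sum_mono2) auto
  also have "\<dots> \<le> (\<Sum>a\<in>A. t)" by (rule sum_mono) (rule assms(5))
  also have "\<dots> = t * card A" by simp
  finally show ?thesis .
qed

section \<open>The grid \<open>P\<^sub>3 \<box> P\<^sub>n\<close>\<close>

lemma grid_V_iff: "(x, y) \<in> grid_V n \<longleftrightarrow> x < 3 \<and> y < n"
  by (auto simp: grid_V_def path_graph_def)

lemma grid_E_iff:
  "grid_E (a, b) (x, y) \<longleftrightarrow> a = x \<and> (b = Suc y \<or> y = Suc b) \<or> b = y \<and> (a = Suc x \<or> x = Suc a)"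
  by (auto simp: grid_E_def cart_adj_def path_adj_def)

lemma finite_grid_V: "finite (grid_V n)"
  by (simp add: grid_V_def path_graph_def)

lemma card_grid_V: "card (grid_V n) = 3 * n"
  by (simp add: grid_V_def path_graph_def card_cartesian_product)

lemma mem_adj_trace_grid:
  "z \<in> adj_trace grid_E A (r, j) \<longleftrightarrow>
     z \<in> A \<and> (z = (r, Suc j) \<or> 0 < j \<and> z = (r, j - 1) \<or> z = (Suc r, j) \<or> 0 < r \<and> z = (r - 1, j))"
  by (cases z) (auto simp: adj_trace_def grid_E_iff)

section \<open>A periodic adjacency resolving set\<close>

definition column_type :: "nat \<Rightarrow> nat \<Rightarrow> nat" where
  "column_type s j = (j + s) mod 3"

lemma column_type_less: "column_type s j < 3"
  by (simp add: column_type_def)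

lemma column_type_Suc:
  "column_type s (Suc j) = (if column_type s j = 2 then 0 else Suc (column_type s j))"
  by (simp add: column_type_def mod_Suc)

lemma column_type_pred:
  "0 < j \<Longrightarrow> column_type s (j - Suc 0) = (if column_type s j = 0 then 2 else column_type s j - 1)"
  using column_type_Suc[of s "j - 1"] column_type_less[of s "j - 1"] by auto

definition pattern_rows :: "nat \<Rightarrow> nat set" where
  "pattern_rows t = (if t = 0 then {0, 2} else if t = 1 then {1} else {})"

definition pattern :: "nat \<Rightarrow> nat \<Rightarrow> (nat \<times> nat) set" where
  "pattern s n = {(r, j). j < n \<and> r \<in> pattern_rows (column_type s j)}"

lemma pattern_subset_grid_V: "pattern s n \<subseteq> grid_V n"
  by (auto simp: pattern_def pattern_rows_def grid_V_iff split: if_splits)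

definition trace_shape :: "nat \<times> nat \<Rightarrow> (nat \<times> nat) set \<Rightarrow> bool" where
  "trace_shape v T \<longleftrightarrow> (case v of (r, j) \<Rightarrow> r < 3 \<and>
     (r = 1 \<and> T = {(0, j), (2, j), (1, Suc j)} \<or> r = 1 \<and> T = {(0, j), (2, j)} \<or>
      r \<noteq> 1 \<and> 0 < j \<and> T = {(1, j), (r, j - 1)} \<or> r = 1 \<and> 0 < j \<and> T = {(1, j - 1)} \<or>
      v = (1, 0) \<and> T = {} \<or> r \<noteq> 1 \<and> T = {(r, Suc j)}))"

lemma trace_shape_unique: "trace_shape x T \<Longrightarrow> trace_shape y T \<Longrightarrow> x = y"
proof -
  assume "trace_shape x T" "trace_shape y T"
  moreover obtain r j r' j' where "x = (r, j)" "y = (r', j')" by fastforce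
  ultimately show ?thesis
    unfolding trace_shape_def
    by (simp only: prod.case) (elim conjE disjE; simp only: ; erule equalityE; auto)
qed

(* The hypotheses exclude a first column of type 1, where both outer vertices would have trace
   {(1, 0)}, and a last column of type 2, where both would have empty trace. *)
lemma trace_shape_adj_trace_pattern:
  assumes first: "column_type s 0 \<noteq> 1" and last: "column_type s n \<noteq> 0"
    and v: "(r, j) \<in> grid_V n - pattern s n"
  shows "trace_shape (r, j) (adj_trace grid_E (pattern s n) (r, j))"
proof -
  let ?T = "adj_trace grid_E (pattern s n) (r, j)"
  note simps = mem_adj_trace_grid pattern_def pattern_rows_def column_type_Suc column_type_pred
  have "r < 3" "j < n" "(r, j) \<notin> pattern s n" using v by (auto simp: grid_V_iff)
  consider "column_type s j = 0" | "column_type s j = 1" | "column_type s j = 2"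
    using column_type_less[of s j] by linarith
  then show ?thesis
  proof cases
    case 1
    then have "r = 1" using \<open>r < 3\<close> \<open>(r, j) \<notin> pattern s n\<close> \<open>j < n\<close> by (auto simp: simps)
    have "?T = {(0, j), (2, j)} \<union> (if Suc j < n then {(1, Suc j)} else {})"
      using 1 \<open>r = 1\<close> \<open>j < n\<close> by (auto simp: simps)
    then show ?thesis using \<open>r = 1\<close> by (auto simp: trace_shape_def)
  next
    case 2
    then have "0 < j" using first by (cases j) auto
    have "r \<noteq> 1" using 2 \<open>(r, j) \<notin> pattern s n\<close> \<open>j < n\<close> by (auto simp: simps)
    have "?T = {(1, j), (r, j - 1)}"
      using 2 \<open>r \<noteq> 1\<close> \<open>0 < j\<close> \<open>j < n\<close> \<open>r < 3\<close> by (auto simp: simps)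
    then show ?thesis using \<open>r \<noteq> 1\<close> \<open>0 < j\<close> \<open>r < 3\<close> by (auto simp: trace_shape_def)
  next
    case 3
    have "Suc j < n"
    proof (rule ccontr)
      assume "\<not> Suc j < n"
      then have "n = Suc j" using \<open>j < n\<close> by simp
      then show False using last 3 column_type_Suc[of s j] by simp
    qed
    show ?thesis
    proof (cases "r = 1")
      case True
      then have "?T = (if 0 < j then {(1, j - 1)} else {})" using 3 \<open>j < n\<close> by (auto simp: simps)
      then show ?thesis using True by (auto simp: trace_shape_def)
    next
      case False
      then have "?T = {(r, Suc j)}" using 3 \<open>Suc j < n\<close> \<open>r < 3\<close> by (auto simp: simps)
      then show ?thesis using False \<open>r < 3\<close> by (auto simp: trace_shape_def)
    qed
  qed
qed

lemma pattern_adj_resolving: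
  assumes "column_type s 0 \<noteq> 1" "column_type s n \<noteq> 0"
  shows "adj_resolving (grid_V n) grid_E (pattern s n)"
  unfolding adj_resolving_iff_inj_on_adj_trace
proof
  show "pattern s n \<subseteq> grid_V n" by (rule pattern_subset_grid_V)
  show "inj_on (adj_trace grid_E (pattern s n)) (grid_V n - pattern s n)"
  proof (rule inj_onI)
    fix x y
    assume "x \<in> grid_V n - pattern s n" "y \<in> grid_V n - pattern s n"
      and "adj_trace grid_E (pattern s n) x = adj_trace grid_E (pattern s n) y"
    then show "x = y"
      using trace_shape_adj_trace_pattern[OF assms] trace_shape_unique by (metis surj_pair)
  qed
qed

lemma card_pattern: "card (pattern s n) = (\<Sum>j<n. 2 - column_type s j)"
proof (induction n)
  case (Suc n)
  let ?C = "(\<lambda>r. (r, n)) ` pattern_rows (column_type s n)"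
  have "pattern s (Suc n) = pattern s n \<union> ?C" by (auto simp: pattern_def less_Suc_eq)
  moreover have "pattern s n \<inter> ?C = {}" by (auto simp: pattern_def)
  moreover have "card ?C = 2 - column_type s n"
    using column_type_less[of s n] by (simp add: card_image inj_on_def pattern_rows_def)
  moreover have "finite (pattern s n)"
    using pattern_subset_grid_V finite_grid_V by (rule finite_subset)
  moreover have "finite ?C" by (simp add: pattern_rows_def)
  ultimately show ?case using Suc by (simp add: card_Un_disjoint)
qed (simp add: pattern_def)

lemma card_pattern_add_3: "card (pattern s (n + 3)) = card (pattern s n) + 3"
proof -
  have "(2 - column_type s n) + (2 - column_type s (Suc n)) + (2 - column_type s (Suc (Suc n))) = 3"
    using column_type_less[of s n] by (auto simp: column_type_Suc)
  then show ?thesis by (simp add: card_pattern numeral_3_eq_3)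
qed

lemma card_pattern_div_mod: "card (pattern s n) = 3 * (n div 3) + card (pattern s (n mod 3))"
proof (induction n rule: less_induct)
  case (less n)
  show ?case
  proof (cases "n < 3")
    case False
    then obtain m where m: "n = m + 3" by (metis add.commute le_Suc_ex not_less)
    then have "n div 3 = m div 3 + 1" "n mod 3 = m mod 3" by simp_all
    with m less[of m] show ?thesis by (simp add: card_pattern_add_3)
  qed simp
qed

lemma card_pattern_0: "n mod 3 = 1 \<Longrightarrow> card (pattern 0 n) = n + 1"
proof -
  assume "n mod 3 = 1"
  moreover have "card (pattern 0 1) = 2" by (simp add: card_pattern column_type_def)
  ultimately show ?thesis using card_pattern_div_mod[of 0 n] by presburger
qed

lemma card_pattern_2: "n mod 3 \<noteq> 1 \<Longrightarrow> card (pattern 2 n) = n"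
proof -
  assume "n mod 3 \<noteq> 1"
  then have "n mod 3 = 0 \<or> n mod 3 = 2" by linarith
  moreover have "card (pattern 2 0) = 0" "card (pattern 2 2) = 2"
    by (simp_all add: card_pattern column_type_def numeral_2_eq_2)
  ultimately show ?thesis using card_pattern_div_mod[of 2 n] by (elim disjE; simp; presburger)
qed

section \<open>Discharging\<close>

(* A vertex v outside A splits charge 2 evenly among its receivers: a middle-row vertex prefers
   its vertical neighbours in A, an outer-row vertex with three neighbours in A sends everything
   to the middle one. *)
definition receivers :: "(nat \<times> nat) set \<Rightarrow> nat \<times> nat \<Rightarrow> (nat \<times> nat) set" where
  "receivers A v =
     (let T = adj_trace grid_E A v; C = {a \<in> T. snd a = snd v} in
      if fst v = 1 then (if C = {} then T else C) else if card T = 3 then C else T)"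

definition charge :: "(nat \<times> nat) set \<Rightarrow> nat \<times> nat \<Rightarrow> nat \<times> nat \<Rightarrow> nat" where
  "charge A v a = (if a \<in> receivers A v then 2 div card (receivers A v) else 0)"

lemma receivers_subset: "receivers A v \<subseteq> adj_trace grid_E A v"
  by (auto simp: receivers_def Let_def)

lemma charge_eq_0_if_not_adjacent: "\<not> grid_E a v \<Longrightarrow> charge A v a = 0"
  using receivers_subset[of A v] by (auto simp: charge_def adj_trace_def)

lemma adj_trace_middle:
  "adj_trace grid_E A (1, y) =
     A \<inter> ({(0, y), (2, y)} \<union> {(1, Suc y)} \<union> (if 0 < y then {(1, y - 1)} else {}))"
  by (auto simp: mem_adj_trace_grid numeral_2_eq_2)

lemma adj_trace_outer:
  assumes "A \<subseteq> grid_V n" "x = 0 \<or> x = 2"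
  shows "adj_trace grid_E A (x, y) =
     A \<inter> ({(1, y)} \<union> {(x, Suc y)} \<union> (if 0 < y then {(x, y - 1)} else {}))"
proof -
  have "(3, y) \<notin> A" using assms(1) by (auto simp: grid_V_iff)
  then show ?thesis using assms(2) by (auto simp: mem_adj_trace_grid)
qed

lemma card_adj_trace_outer_eq_3:
  assumes "A \<subseteq> grid_V n" "x = 0 \<or> x = 2"
  shows "card (adj_trace grid_E A (x, y)) = 3 \<longleftrightarrow>
    (1, y) \<in> A \<and> (x, Suc y) \<in> A \<and> 0 < y \<and> (x, y - 1) \<in> A"
proof (cases "0 < y")
  case True
  let ?S = "{(1, y), (x, Suc y), (x, y - 1)}"
  have "card ?S = 3" using True assms(2) by auto
  moreover have "adj_trace grid_E A (x, y) = A \<inter> ?S"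
    using True by (auto simp: adj_trace_outer[OF assms])
  moreover have "card (A \<inter> ?S) = card ?S \<longleftrightarrow> ?S \<subseteq> A"
    using card_subset_eq[of ?S "A \<inter> ?S"] by (auto simp: Int_absorb1)
  ultimately show ?thesis using True by simp
next
  case False
  then have "adj_trace grid_E A (x, y) \<subseteq> {(1, y), (x, Suc y)}"
    by (auto simp: adj_trace_outer[OF assms])
  then have "card (adj_trace grid_E A (x, y)) \<le> 2" by (rule card_le_2_if_subset_doubleton)
  then show ?thesis using False by auto
qed

lemma receivers_middle:
  "receivers A (1, y) =
     (if A \<inter> {(0, y), (2, y)} = {} then adj_trace grid_E A (1, y) else A \<inter> {(0, y), (2, y)})"
proof -
  have "{a \<in> adj_trace grid_E A (1, y). snd a = y} = A \<inter> {(0, y), (2, y)}"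
    by (auto simp: mem_adj_trace_grid numeral_2_eq_2)
  then show ?thesis unfolding receivers_def Let_def fst_conv snd_conv by simp
qed

lemma receivers_outer:
  assumes "A \<subseteq> grid_V n" "x = 0 \<or> x = 2"
  shows "receivers A (x, y) =
     (if (1, y) \<in> A \<and> (x, Suc y) \<in> A \<and> 0 < y \<and> (x, y - 1) \<in> A then {(1, y)}
      else adj_trace grid_E A (x, y))"
proof -
  have column: "{a \<in> adj_trace grid_E A (x, y). snd a = y} = A \<inter> {(1, y)}"
    using assms(2) by (auto simp: adj_trace_outer[OF assms])
  have "x \<noteq> 1" using assms(2) by auto
  then show ?thesis
    unfolding receivers_def Let_def fst_conv snd_conv card_adj_trace_outer_eq_3[OF assms] column
    by auto
qed

lemma receivers_nonempty_card_le_2: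
  assumes "A \<subseteq> grid_V n" "(x, y) \<in> grid_V n" "adj_trace grid_E A (x, y) \<noteq> {}"
  shows "receivers A (x, y) \<noteq> {} \<and> card (receivers A (x, y)) \<le> 2"
proof -
  have "x < 3" using assms(2) by (simp add: grid_V_iff)
  then consider "x = 1" | "x = 0 \<or> x = 2" by linarith
  then show ?thesis
  proof cases
    case 1
    have "adj_trace grid_E A (1, y) \<subseteq> {(1, Suc y), (1, y - 1)}" if "A \<inter> {(0, y), (2, y)} = {}"
      using that by (auto simp: mem_adj_trace_grid numeral_2_eq_2)
    then show ?thesis
      using assms(3) card_le_2_if_subset_doubleton[of "A \<inter> {(0, y), (2, y)}" "(0, y)" "(2, y)"]
        card_le_2_if_subset_doubleton[of "adj_trace grid_E A (1, y)" "(1, Suc y)" "(1, y - 1)"]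
      unfolding 1 receivers_middle by auto
  next
    case 2
    let ?T = "adj_trace grid_E A (x, y)"
    have "card ?T \<le> card {(1, y), (x, Suc y), (x, y - 1)}"
      by (intro card_mono) (auto simp: adj_trace_outer[OF assms(1) 2])
    also have "\<dots> \<le> 3" by (simp add: card_insert_if)
    finally show ?thesis
      using assms(3) card_adj_trace_outer_eq_3[OF assms(1) 2, of y]
      by (auto simp: receivers_outer[OF assms(1) 2])
  qed
qed

lemma sum_charge_sent_eq_2:
  assumes "A \<subseteq> grid_V n" "v \<in> grid_V n" "adj_trace grid_E A v \<noteq> {}"
  shows "(\<Sum>a\<in>A. charge A v a) = 2"
proof -
  let ?R = "receivers A v"
  have "finite A" using assms(1) finite_grid_V by (rule finite_subset)
  have "?R \<subseteq> A" using receivers_subset[of A v] by (auto simp: adj_trace_def)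
  have "(\<Sum>a\<in>A. charge A v a) = (\<Sum>a\<in>?R. 2 div card ?R)"
    using \<open>finite A\<close> \<open>?R \<subseteq> A\<close> by (intro sum.mono_neutral_cong_right) (auto simp: charge_def)
  also have "\<dots> = card ?R * (2 div card ?R)" by simp
  also have "\<dots> = 2"
    using receivers_nonempty_card_le_2[of A n "fst v" "snd v"] assms
      finite_subset[OF \<open>?R \<subseteq> A\<close> \<open>finite A\<close>]
    by (auto simp: le_Suc_eq numeral_2_eq_2)
  finally show ?thesis .
qed

lemma charge_middle_vertical:
  assumes "(x, y) \<in> A" "x = 0 \<or> x = 2"
  shows "charge A (1, y) (x, y) = (if (2 - x, y) \<in> A then 1 else 2)"
  using assms unfolding charge_def receivers_middle
  by (auto simp: Int_insert_right card_insert_if numeral_2_eq_2)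

lemma charge_middle_right:
  "charge A (1, y) (1, Suc y) =
     (if (1, Suc y) \<in> A \<and> (0, y) \<notin> A \<and> (2, y) \<notin> A
      then (if 0 < y \<and> (1, y - 1) \<in> A then 1 else 2) else 0)"
  unfolding charge_def receivers_middle adj_trace_middle
  by (auto simp: Int_insert_right card_insert_if numeral_2_eq_2)

lemma charge_middle_left:
  "charge A (1, Suc y) (1, y) =
     (if (1, y) \<in> A \<and> (0, Suc y) \<notin> A \<and> (2, Suc y) \<notin> A
      then (if (1, Suc (Suc y)) \<in> A then 1 else 2) else 0)"
  unfolding charge_def receivers_middle adj_trace_middle
  by (auto simp: Int_insert_right card_insert_if numeral_2_eq_2)

lemma charge_outer_vertical:
  assumes "A \<subseteq> grid_V n" "x = 0 \<or> x = 2"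
  shows "charge A (x, y) (1, y) =
    (if (1, y) \<in> A
     then (if (0 < y \<and> (x, y - 1) \<in> A) \<and> (x, Suc y) \<in> A then 2
           else if (0 < y \<and> (x, y - 1) \<in> A) \<or> (x, Suc y) \<in> A then 1 else 2)
     else 0)"
  using assms(2) unfolding charge_def receivers_outer[OF assms] adj_trace_outer[OF assms]
  by (auto simp: Int_insert_right card_insert_if numeral_2_eq_2)

lemma charge_outer_right:
  assumes "A \<subseteq> grid_V n" "x = 0 \<or> x = 2"
  shows "charge A (x, y) (x, Suc y) =
    (if (x, Suc y) \<in> A \<and> \<not> ((1, y) \<in> A \<and> 0 < y \<and> (x, y - 1) \<in> A)
     then (if (1, y) \<in> A \<or> (0 < y \<and> (x, y - 1) \<in> A) then 1 else 2) else 0)"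
  using assms(2) unfolding charge_def receivers_outer[OF assms] adj_trace_outer[OF assms]
  by (auto simp: Int_insert_right card_insert_if numeral_2_eq_2)

lemma charge_outer_left:
  assumes "A \<subseteq> grid_V n" "x = 0 \<or> x = 2"
  shows "charge A (x, Suc y) (x, y) =
    (if (x, y) \<in> A \<and> \<not> ((1, Suc y) \<in> A \<and> (x, Suc (Suc y)) \<in> A)
     then (if (1, Suc y) \<in> A \<or> (x, Suc (Suc y)) \<in> A then 1 else 2) else 0)"
  using assms(2) unfolding charge_def receivers_outer[OF assms] adj_trace_outer[OF assms]
  by (auto simp: Int_insert_right card_insert_if numeral_2_eq_2)

lemma separating_vertex:
  assumes "A \<subseteq> grid_V n" "inj_on (adj_trace grid_E A) (grid_V n - A)"
    and "u \<in> grid_V n - A" "v \<in> grid_V n - A" "u \<noteq> v"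
  shows "\<exists>r j. (r, j) \<in> A \<and> (r = 0 \<or> r = 1 \<or> r = 2) \<and> grid_E (r, j) u \<noteq> grid_E (r, j) v"
proof -
  have "adj_trace grid_E A u \<noteq> adj_trace grid_E A v" using assms(2-5) by (auto dest: inj_onD)
  then obtain z where "z \<in> A" "grid_E z u \<noteq> grid_E z v" by (auto simp: adj_trace_def set_eq_iff)
  moreover have "fst z < 3" using \<open>z \<in> A\<close> assms(1) by (auto simp: grid_V_def path_graph_def)
  ultimately show ?thesis by (intro exI[of _ "fst z"] exI[of _ "snd z"]) auto
qed

lemma charge_received_middle_le:
  assumes A: "A \<subseteq> grid_V n" and inj: "inj_on (adj_trace grid_E A) (grid_V n - A)"
    and a: "(1, c) \<in> A"
    and g: "g = (\<lambda>v. if v \<in> grid_V n - A then charge A v (1, c) else 0)"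
  shows "g (0, c) + g (2, c) + g (1, c - 1) + g (1, Suc c) \<le> 4"
proof -
  define F where "F = grid_V n - A"
  define l0 where "l0 \<longleftrightarrow> 0 < c \<and> (0, c - 1) \<in> A"
  define l2 where "l2 \<longleftrightarrow> 0 < c \<and> (2, c - 1) \<in> A"
  define r0 where "r0 \<longleftrightarrow> (0, Suc c) \<in> A"
  define r2 where "r2 \<longleftrightarrow> (2, Suc c) \<in> A"
  define ll where "ll \<longleftrightarrow> 1 < c \<and> (1, c - 2) \<in> A"
  define rr where "rr \<longleftrightarrow> (1, Suc (Suc c)) \<in> A"
  note defs = l0_def l2_def r0_def r2_def ll_def rr_def
  note sep = separating_vertex[OF A inj, folded F_def]
  have c_pos: "0 < c" if "(1, c - 1) \<in> F" using that a unfolding F_def by (cases c) auto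
  have up_down: "l0 \<or> r0 \<or> l2 \<or> r2" if h: "(0, c) \<in> F" "(2, c) \<in> F"
    using sep[OF h] by (auto simp: defs grid_E_iff numeral_2_eq_2)
  have up_left: "r0 \<or> l2 \<or> ll" if h: "(0, c) \<in> F" "(1, c - 1) \<in> F"
    using sep[OF h] c_pos[OF h(2)] h by (cases c) (auto simp: defs grid_E_iff numeral_2_eq_2 F_def)
  have up_right: "l0 \<or> r2 \<or> rr" if h: "(0, c) \<in> F" "(1, Suc c) \<in> F"
    using sep[OF h] by (auto simp: defs grid_E_iff numeral_2_eq_2)
  have down_left: "r2 \<or> l0 \<or> ll" if h: "(2, c) \<in> F" "(1, c - 1) \<in> F"
    using sep[OF h] c_pos[OF h(2)] h by (cases c) (auto simp: defs grid_E_iff numeral_2_eq_2 F_def)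
  have down_right: "l2 \<or> r0 \<or> rr" if h: "(2, c) \<in> F" "(1, Suc c) \<in> F"
    using sep[OF h] by (auto simp: defs grid_E_iff numeral_2_eq_2)
  have left_right: "l0 \<or> l2 \<or> ll \<or> r0 \<or> r2 \<or> rr" if h: "(1, c - 1) \<in> F" "(1, Suc c) \<in> F"
    using sep[OF h] c_pos[OF h(1)] h by (cases c) (auto simp: defs grid_E_iff numeral_2_eq_2 F_def)
  have g_up: "g (0, c) =
      (if (0, c) \<in> F then (if l0 \<and> r0 then 2 else if l0 \<or> r0 then 1 else 2) else 0)"
    using charge_outer_vertical[OF A, of 0 c] a by (simp add: g F_def defs)
  have g_down: "g (2, c) =
      (if (2, c) \<in> F then (if l2 \<and> r2 then 2 else if l2 \<or> r2 then 1 else 2) else 0)"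
    using charge_outer_vertical[OF A, of 2 c] a by (simp add: g F_def defs)
  have g_left: "g (1, c - 1) =
      (if (1, c - 1) \<in> F then (if \<not> l0 \<and> \<not> l2 then (if ll then 1 else 2) else 0) else 0)"
    using charge_middle_right[of A "c - 1"] a c_pos
    by (cases c) (auto simp: g F_def defs numeral_2_eq_2)
  have g_right: "g (1, Suc c) =
      (if (1, Suc c) \<in> F then (if \<not> r0 \<and> \<not> r2 then (if rr then 1 else 2) else 0) else 0)"
    using charge_middle_left[of A c] a by (simp add: g F_def defs)
  show ?thesis
    unfolding g_up g_down g_left g_right
    using up_down up_left up_right down_left down_right left_right by auto
qed

lemma charge_received_outer_le:
  assumes A: "A \<subseteq> grid_V n" and inj: "inj_on (adj_trace grid_E A) (grid_V n - A)"
    and x: "x = 0 \<or> x = 2" and a: "(x, c) \<in> A"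
    and g: "g = (\<lambda>v. if v \<in> grid_V n - A then charge A v (x, c) else 0)"
  shows "g (1, c) + g (x, c - 1) + g (x, Suc c) \<le> 4"
proof -
  define F where "F = grid_V n - A"
  define opp where "opp \<longleftrightarrow> (2 - x, c) \<in> A"
  define ml where "ml \<longleftrightarrow> 0 < c \<and> (1, c - 1) \<in> A"
  define mr where "mr \<longleftrightarrow> (1, Suc c) \<in> A"
  define ll where "ll \<longleftrightarrow> 1 < c \<and> (x, c - 2) \<in> A"
  define rr where "rr \<longleftrightarrow> (x, Suc (Suc c)) \<in> A"
  note defs = opp_def ml_def mr_def ll_def rr_def
  note sep = separating_vertex[OF A inj, folded F_def]
  have c_pos: "0 < c" if "(x, c - 1) \<in> F" using that a unfolding F_def by (cases c) auto
  have middle_left: "opp \<or> mr \<or> ll" if h: "(1, c) \<in> F" "(x, c - 1) \<in> F"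
    using sep[OF h] c_pos[OF h(2)] h x a
    by (cases c) (auto simp: defs grid_E_iff numeral_2_eq_2 F_def)
  have middle_right: "opp \<or> ml \<or> rr" if h: "(1, c) \<in> F" "(x, Suc c) \<in> F"
    using sep[OF h] h x a by (auto simp: defs grid_E_iff numeral_2_eq_2 F_def)
  have left_right: "ml \<or> ll \<or> mr \<or> rr" if h: "(x, c - 1) \<in> F" "(x, Suc c) \<in> F"
    using sep[OF h] c_pos[OF h(1)] h x a
    by (cases c) (auto simp: defs grid_E_iff numeral_2_eq_2 F_def)
  have g_middle: "g (1, c) = (if (1, c) \<in> F then (if opp then 1 else 2) else 0)"
    using charge_middle_vertical[OF a x] by (simp add: g F_def defs)
  have g_left: "g (x, c - 1) =
      (if (x, c - 1) \<in> F then (if \<not> (ml \<and> ll) then (if ml \<or> ll then 1 else 2) else 0) else 0)"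
    using charge_outer_right[OF A x, of "c - 1"] a c_pos
    by (cases c) (auto simp: g F_def defs numeral_2_eq_2)
  have g_right: "g (x, Suc c) =
      (if (x, Suc c) \<in> F then (if \<not> (mr \<and> rr) then (if mr \<or> rr then 1 else 2) else 0) else 0)"
    using charge_outer_left[OF A x, of c] a by (simp add: g F_def defs)
  show ?thesis
    unfolding g_middle g_left g_right using middle_left middle_right left_right by auto
qed

lemma sum_charge_received_le:
  assumes A: "A \<subseteq> grid_V n" and inj: "inj_on (adj_trace grid_E A) (grid_V n - A)"
    and a: "(x, y) \<in> A"
  shows "(\<Sum>v\<in>grid_V n - A. charge A v (x, y)) \<le> 4"
proof -
  define g where "g = (\<lambda>v. if v \<in> grid_V n - A then charge A v (x, y) else 0)"
  let ?N = "{(x - 1, y), (Suc x, y), (x, y - 1), (x, Suc y)}"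
  have "charge A v (x, y) = 0" if "v \<notin> ?N" for v
    using that by (intro charge_eq_0_if_not_adjacent) (cases v, auto simp: grid_E_iff)
  then have "(\<Sum>v\<in>grid_V n - A. charge A v (x, y)) = (\<Sum>v\<in>(grid_V n - A) \<inter> ?N. charge A v (x, y))"
    by (intro sum.mono_neutral_right finite_Diff finite_grid_V) blast+
  also have "\<dots> = (\<Sum>v\<in>?N \<inter> (grid_V n - A). charge A v (x, y))"
    by (simp only: Int_commute)
  also have "\<dots> = (\<Sum>v\<in>?N. g v)"
    unfolding g_def by (rule sum.inter_restrict) simp
  also have "\<dots> \<le> g (x - 1, y) + g (Suc x, y) + g (x, y - 1) + g (x, Suc y)"
    by (rule sum_insert4_le)
  also have "\<dots> \<le> 4"
  proof -
    have "x < 3" using a A by (auto simp: grid_V_iff)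
    then consider "x = 1" | "x = 0" | "x = 2" by linarith
    then show ?thesis
    proof cases
      case 1
      with charge_received_middle_le[OF A inj a[unfolded 1] g_def[unfolded 1]] show ?thesis
        by (simp add: numeral_2_eq_2)
    next
      case 2
      with charge_received_outer_le[OF A inj _ a g_def] a show ?thesis by (simp add: g_def)
    next
      case 3
      with charge_received_outer_le[OF A inj _ a g_def] show ?thesis by (simp add: g_def grid_V_iff)
    qed
  qed
  finally show ?thesis .
qed

lemma card_ge_if_adj_resolving_grid:
  assumes "adj_resolving (grid_V n) grid_E A"
  shows "n \<le> card A"
proof -
  let ?F = "grid_V n - A"
  let ?F' = "{v \<in> ?F. adj_trace grid_E A v \<noteq> {}}"
  have A: "A \<subseteq> grid_V n" and inj: "inj_on (adj_trace grid_E A) ?F"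
    using assms by (auto simp: adj_resolving_iff_inj_on_adj_trace)
  have "finite A" using A finite_grid_V by (rule finite_subset)
  have "card ?F = 3 * n - card A"
    using A \<open>finite A\<close> by (simp add: card_Diff_subset card_grid_V)
  moreover have "card ?F \<le> Suc (card ?F')"
    using inj finite_grid_V by (intro card_le_Suc_card_filter_if_inj_on) auto
  moreover have "2 * card ?F' \<le> 4 * card A"
    using \<open>finite A\<close> sum_charge_sent_eq_2[OF A] sum_charge_received_le[OF A inj]
    by (intro double_counting_le[where c = "charge A" and F = ?F]) (auto simp: finite_grid_V)
  moreover have "card A \<le> 3 * n"
    using A by (metis card_grid_V card_mono finite_grid_V)
  ultimately show ?thesis by linarith
qed

theorem theorem1p12:
  fixes n :: nat
  assumes "n \<ge> 1"
  shows "(n mod 3 = 1 \<longrightarrow> n \<le> adim (grid_V n) grid_E \<and> adim (grid_V n) grid_E \<le> n + 1) \<and>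
         (n mod 3 \<noteq> 1 \<longrightarrow> n - 1 \<le> adim (grid_V n) grid_E \<and> adim (grid_V n) grid_E \<le> n)"
proof -
  obtain A where "adj_resolving (grid_V n) grid_E A" "card A = adim (grid_V n) grid_E"
    using adim_attained by blast
  then have lower: "n \<le> adim (grid_V n) grid_E" using card_ge_if_adj_resolving_grid by metis
  have upper: "adim (grid_V n) grid_E \<le> (if n mod 3 = 1 then n + 1 else n)"
  proof (cases "n mod 3 = 1")
    case True
    then have "adj_resolving (grid_V n) grid_E (pattern 0 n)"
      by (intro pattern_adj_resolving) (simp_all add: column_type_def)
    then show ?thesis using True card_pattern_0 adim_le_card by fastforce
  next
    case False
    then have "adj_resolving (grid_V n) grid_E (pattern 2 n)"
      by (intro pattern_adj_resolving) (unfold column_type_def, presburger+)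
    then show ?thesis using False card_pattern_2 adim_le_card by fastforce
  qed
  show ?thesis using lower upper by auto
qed

end
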